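(* Let $F$ be the cumulative distribution function of the Cantor distribution and let $m$ be its mean residual life function. Then: (i) $m$ is continuous on $[0,1]$, and for every $x\in[0,1)$, $$m(x)=\frac{1}{F(1-x)}\int_0^{1-x}F(u)\,du .$$ (ii) For every $x\in(0,1)$, each of the functions $m$ and $e$ is locally decreasing at $x$ if and only if $x\in[0,1]\setminus\mathcal C$. (iii) The equation $m(x)=x$ has exactly one solution in $[0,1]$, namely $x^*=\tfrac{5}{12}$.
   Context: The Cantor set is $\mathcal C=\bigcap_{n\ge1}C_n$, where $C_0=[0,1]$ and $C_n=\tfrac13C_{n-1}\cup\left(\tfrac23+\tfrac13C_{n-1}\right)$ for $n\ge1$. The Cantor distribution is the probability distribution on $[0,1]$ that is uniform on $\mathcal C$; its CDF $F$ (the Cantor function) is continuous and nondecreasing, with $F(0)=0$ and $F(1)=1$. For a random variable $X$ on $[0,1]$ with continuous CDF $F$, the mean residual life (MRL) function is $$m(x)=\mathbb E[X-x\mid X>x]=\frac{1}{1-F(x)}\int_x^1(1-F(u))\,du \quad (x<1),\qquad m(x)=0\quad(x\ge1).$$ The generalized mean residual life function is $e(x)=m(x)/x$ for $0<x<1$. A function $f:(0,1)\to\mathbb R$ is called locally decreasing at $x\in(0,1)$ if there is an open neighborhood $U$ of $x$ such that $f|_U$ is non-increasing. *)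

theory Defs
  imports "HOL-Analysis.Analysis"
begin

primrec cantor_step :: "nat \<Rightarrow> real set" where
  "cantor_step 0 = {0..1}"
| "cantor_step (Suc n) = (\<lambda>x. x / 3) ` cantor_step n \<union> (\<lambda>x. 2/3 + x / 3) ` cantor_step n"

definition cantor_set :: "real set" where
  "cantor_set = (\<Inter>n. cantor_step n)"

primrec cantor_iter :: "nat \<Rightarrow> real \<Rightarrow> real" where
  "cantor_iter 0 x = x"
| "cantor_iter (Suc n) x =
     (if x \<le> 1/3 then cantor_iter n (3 * x) / 2
      else if x < 2/3 then 1/2
      else 1/2 + cantor_iter n (3 * x - 2) / 2)"

definition cantor_fun :: "real \<Rightarrow> real" where
  "cantor_fun x = (if x < 0 then 0 else if x > 1 then 1 else lim (\<lambda>n. cantor_iter n x))"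

definition mrl :: "real \<Rightarrow> real" where
  "mrl x = (if x < 1 then (1 / (1 - cantor_fun x)) * integral {x..1} (\<lambda>u. 1 - cantor_fun u)
            else 0)"

text \<open>Generalized mean residual life function e(x) = m(x)/x (used on (0,1)).\<close>
definition gmrl :: "real \<Rightarrow> real" where
  "gmrl x = mrl x / x"

definition locally_decreasing_at :: "(real \<Rightarrow> real) \<Rightarrow> real \<Rightarrow> bool" where
  "locally_decreasing_at f x \<longleftrightarrow>
     (\<exists>U. open U \<and> x \<in> U \<and> U \<subseteq> {0<..<1} \<and> (\<forall>a\<in>U. \<forall>b\<in>U. a \<le> b \<longrightarrow> f b \<le> f a))"

end

theory Submission
  imports Defs
begin

(* The Cantor function F is self-similar, F(x/3) = F(x)/2 and F(2/3 + x/3) = 1/2 + F(x)/2, and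
   symmetric, F(1 - x) = 1 - F(x). Symmetry turns the tail integral of 1 - F into an integral of F,
   which is (i). On the middle third F = 1/2, so m(x) = 5/6 - x there, with the single fixed point
   5/12; left of 1/3 one has m(x) > x and right of 1/2 one has m(x) <= 1 - x < x.
   Off the Cantor set F is locally constant, so m is locally the decreasing tail integral divided
   by a constant. A point of the Cantor set lies in a basic interval [a, b] of length 3^-n across
   which F grows by 2^-n; as m(b) - m(a) >= I(b) (F(b) - F(a)) - (b - a), where I(b) is the tail
   integral, m and e increase across [a, b] as soon as (2/3)^n is small. *)

section \<open>The iterates defining the Cantor function\<close>

lemma cantor_iter_zero [simp]: "cantor_iter n 0 = 0"
  by (induction n) auto

lemma cantor_iter_one [simp]: "cantor_iter n 1 = 1"
  by (induction n) auto

lemma cantor_iter_Suc_left: "x \<le> 1/3 \<Longrightarrow> cantor_iter (Suc n) x = cantor_iter n (3 * x) / 2"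
  by simp

lemma cantor_iter_Suc_middle:
  assumes "x \<in> {1/3..2/3}" shows "cantor_iter (Suc n) x = 1/2"
proof -
  consider "x = 1/3" | "x = 2/3" | "1/3 < x" "x < 2/3" using assms by force
  then show ?thesis
  proof cases
    case 1 show ?thesis unfolding 1 by simp
  next
    case 2 show ?thesis unfolding 2 by simp
  qed simp
qed

lemma cantor_iter_Suc_right: "2/3 \<le> x \<Longrightarrow> cantor_iter (Suc n) x = 1/2 + cantor_iter n (3 * x - 2) / 2"
  by simp

declare cantor_iter.simps(2) [simp del]

lemma cantor_iter_in_unit: "x \<in> {0..1} \<Longrightarrow> cantor_iter n x \<in> {0..1}"
proof (induction n arbitrary: x)
  case (Suc n)
  consider "x \<le> 1/3" | "x \<in> {1/3..2/3}" | "2/3 \<le> x" by force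
  then show ?case
  proof cases
    case 1
    with Suc.IH[of "3 * x"] Suc.prems show ?thesis by (auto simp: cantor_iter_Suc_left)
  next
    case 2
    then show ?thesis by (simp add: cantor_iter_Suc_middle)
  next
    case 3
    with Suc.IH[of "3 * x - 2"] Suc.prems show ?thesis by (auto simp: cantor_iter_Suc_right)
  qed
qed simp

lemma cantor_iter_Suc_dist:
  assumes "x \<in> {0..1}" shows "\<bar>cantor_iter (Suc n) x - cantor_iter n x\<bar> \<le> (1/2) ^ n"
  using assms
proof (induction n arbitrary: x)
  case 0
  then show ?case using cantor_iter_in_unit[OF 0, of 1] by auto
next
  case (Suc n)
  consider "x \<le> 1/3" | "x \<in> {1/3..2/3}" | "2/3 \<le> x" by force
  then show ?case
  proof cases
    case 1
    with Suc.IH[of "3 * x"] Suc.prems show ?thesis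
      by (simp add: cantor_iter_Suc_left abs_div flip: diff_divide_distrib)
  next
    case 2
    then show ?thesis by (simp add: cantor_iter_Suc_middle)
  next
    case 3
    with Suc.IH[of "3 * x - 2"] Suc.prems show ?thesis
      by (simp add: cantor_iter_Suc_right abs_div flip: diff_divide_distrib)
  qed
qed

lemma continuous_on_cantor_iter: "continuous_on {0..1} (cantor_iter n)"
proof (induction n)
  case (Suc n)
  have "continuous_on {0..1/3} (\<lambda>x. cantor_iter n (3 * x) / 2)"
    by (intro continuous_intros continuous_on_compose2[OF Suc]) auto
  then have left: "continuous_on {0..1/3} (cantor_iter (Suc n))"
    by (rule continuous_on_eq) (simp add: cantor_iter_Suc_left)
  have middle: "continuous_on {1/3..2/3} (cantor_iter (Suc n))"
    by (rule continuous_on_eq[OF continuous_on_const[of _ "1/2"]]) (simp add: cantor_iter_Suc_middle)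
  have "continuous_on {2/3..1} (\<lambda>x. 1/2 + cantor_iter n (3 * x - 2) / 2)"
    by (intro continuous_intros continuous_on_compose2[OF Suc]) auto
  then have right: "continuous_on {2/3..1} (cantor_iter (Suc n))"
    by (rule continuous_on_eq) (simp add: cantor_iter_Suc_right)
  have "{0..1} = {0..1/3} \<union> ({1/3..2/3} \<union> {2/3..(1::real)})" by auto
  then show ?case using left middle right by (metis closed_atLeastAtMost closed_Un continuous_on_closed_Un)
qed simp

lemma cantor_iter_mono:
  assumes "x \<in> {0..1}" "y \<in> {0..1}" "x \<le> y" shows "cantor_iter n x \<le> cantor_iter n y"
  using assms
proof (induction n arbitrary: x y)
  case (Suc n)
  have low: "cantor_iter (Suc n) z \<le> 1/2" if "z \<in> {0..2/3}" for z
    using that cantor_iter_in_unit[of "3 * z" n]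
    by (cases "z \<le> 1/3") (auto simp: cantor_iter_Suc_left cantor_iter_Suc_middle)
  have high: "1/2 \<le> cantor_iter (Suc n) z" if "z \<in> {1/3..1}" for z
    using that cantor_iter_in_unit[of "3 * z - 2" n]
    by (cases "2/3 \<le> z") (auto simp: cantor_iter_Suc_right cantor_iter_Suc_middle)
  consider "y \<le> 1/3" | "2/3 \<le> x" | "x \<le> 2/3" "1/3 \<le> y" by linarith
  then show ?case
  proof cases
    case 1
    with Suc.IH[of "3 * x" "3 * y"] Suc.prems show ?thesis by (simp add: cantor_iter_Suc_left)
  next
    case 2
    with Suc.IH[of "3 * x - 2" "3 * y - 2"] Suc.prems show ?thesis by (simp add: cantor_iter_Suc_right)
  next
    case 3
    with low[of x] high[of y] Suc.prems show ?thesis by simp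
  qed
qed simp

lemma cantor_iter_reflect: "x \<in> {0..1} \<Longrightarrow> cantor_iter n (1 - x) = 1 - cantor_iter n x"
proof (induction n arbitrary: x)
  case (Suc n)
  consider "x \<le> 1/3" | "x \<in> {1/3..2/3}" | "2/3 \<le> x" by force
  then show ?case
  proof cases
    case 1
    with Suc.IH[of "3 * x"] Suc.prems show ?thesis
      by (simp add: cantor_iter_Suc_left cantor_iter_Suc_right algebra_simps)
  next
    case 2
    then show ?thesis by (simp add: cantor_iter_Suc_middle)
  next
    case 3
    with Suc.IH[of "3 * x - 2"] Suc.prems show ?thesis
      by (simp add: cantor_iter_Suc_left cantor_iter_Suc_right algebra_simps)
  qed
qed simp

section \<open>The Cantor function\<close>

lemma cantor_iter_uniform_limit: "uniform_limit {0..1} cantor_iter cantor_fun sequentially"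
proof -
  define L where "L x = x + (\<Sum>i. cantor_iter (Suc i) x - cantor_iter i x)" for x
  have "uniform_limit {0..1} (\<lambda>n x. x + (\<Sum>i<n. cantor_iter (Suc i) x - cantor_iter i x)) L sequentially"
    unfolding L_def
    by (intro uniform_limit_add uniform_limit_const
          Weierstrass_m_test[where M = "\<lambda>n. (1/2) ^ n"] summable_geometric)
       (auto simp: cantor_iter_Suc_dist)
  moreover have "x + (\<Sum>i<n. cantor_iter (Suc i) x - cantor_iter i x) = cantor_iter n x" for n x
    using sum_lessThan_telescope[of "\<lambda>i. cantor_iter i x" n] by simp
  ultimately have ul: "uniform_limit {0..1} cantor_iter L sequentially"
    by simp
  have "cantor_fun x = L x" if "x \<in> {0..1}" for x
    using tendsto_uniform_limitI[OF ul that] that by (auto simp: cantor_fun_def limI)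
  with ul show ?thesis by (subst uniform_limit_cong'[where g = cantor_iter and i = L]) auto
qed

lemma cantor_iter_tendsto: "x \<in> {0..1} \<Longrightarrow> (\<lambda>n. cantor_iter n x) \<longlonglongrightarrow> cantor_fun x"
  by (rule tendsto_uniform_limitI[OF cantor_iter_uniform_limit])

lemma cantor_fun_eq_0: "x \<le> 0 \<Longrightarrow> cantor_fun x = 0"
  using LIMSEQ_unique[OF cantor_iter_tendsto[of 0]] by (auto simp: cantor_fun_def)

lemma cantor_fun_eq_1: "1 \<le> x \<Longrightarrow> cantor_fun x = 1"
  using LIMSEQ_unique[OF cantor_iter_tendsto[of 1]] by (auto simp: cantor_fun_def)

lemma continuous_on_cantor_fun: "continuous_on A cantor_fun"
proof -
  have "continuous_on {0..1} cantor_fun"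
    by (rule uniform_limit_theorem[OF _ cantor_iter_uniform_limit])
       (simp_all add: continuous_on_cantor_iter)
  moreover have "continuous_on {..0} cantor_fun" "continuous_on {1..} cantor_fun"
    by (auto intro: continuous_on_eq[OF continuous_on_const] simp: cantor_fun_eq_0 cantor_fun_eq_1)
  moreover have "UNIV = {..0} \<union> ({0..1} \<union> {(1::real)..})" by auto
  ultimately have "continuous_on UNIV cantor_fun"
    by (metis closed_atLeastAtMost closed_atMost closed_atLeast closed_Un continuous_on_closed_Un)
  then show ?thesis by (rule continuous_on_subset) simp
qed

lemma cantor_fun_in_unit: "cantor_fun x \<in> {0..1}"
proof (cases "x \<in> {0..1}")
  case True
  show ?thesis
    by (rule closed_sequentially[OF _ cantor_iter_in_unit[OF True] cantor_iter_tendsto[OF True]]) simp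
qed (auto simp: cantor_fun_def)

lemma cantor_fun_nonneg: "0 \<le> cantor_fun x"
  using cantor_fun_in_unit by simp

lemma cantor_fun_le_1: "cantor_fun x \<le> 1"
  using cantor_fun_in_unit by simp

lemma mono_cantor_fun: "mono cantor_fun"
proof
  fix x y :: real assume "x \<le> y"
  show "cantor_fun x \<le> cantor_fun y"
  proof (cases "x < 0 \<or> 1 < y")
    case True
    then show ?thesis
      using cantor_fun_nonneg[of y] cantor_fun_le_1[of x] \<open>x \<le> y\<close> by (auto simp: cantor_fun_def)
  next
    case False
    with \<open>x \<le> y\<close> have "x \<in> {0..1}" "y \<in> {0..1}" by auto
    with \<open>x \<le> y\<close> show ?thesis
      by (intro lim_mono[OF _ cantor_iter_tendsto cantor_iter_tendsto]) (auto intro: cantor_iter_mono)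
  qed
qed

lemma cantor_fun_third:
  assumes u: "u \<in> {0..1}" shows "cantor_fun (u / 3) = cantor_fun u / 2"
proof (rule LIMSEQ_unique)
  show "(\<lambda>n. cantor_iter (Suc n) (u / 3)) \<longlonglongrightarrow> cantor_fun (u / 3)"
    by (rule LIMSEQ_Suc[OF cantor_iter_tendsto]) (use u in auto)
  show "(\<lambda>n. cantor_iter (Suc n) (u / 3)) \<longlonglongrightarrow> cantor_fun u / 2"
    using u by (simp add: cantor_iter_Suc_left tendsto_divide cantor_iter_tendsto)
qed

lemma cantor_fun_shifted_third:
  assumes u: "u \<in> {0..1}" shows "cantor_fun (2/3 + u / 3) = 1/2 + cantor_fun u / 2"
proof (rule LIMSEQ_unique)
  show "(\<lambda>n. cantor_iter (Suc n) (2/3 + u / 3)) \<longlonglongrightarrow> cantor_fun (2/3 + u / 3)"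
    by (rule LIMSEQ_Suc[OF cantor_iter_tendsto]) (use u in auto)
  show "(\<lambda>n. cantor_iter (Suc n) (2/3 + u / 3)) \<longlonglongrightarrow> 1/2 + cantor_fun u / 2"
    using u by (simp add: cantor_iter_Suc_right tendsto_add tendsto_divide cantor_iter_tendsto)
qed

lemma cantor_fun_middle_third:
  assumes x: "x \<in> {1/3..2/3}" shows "cantor_fun x = 1/2"
proof (rule LIMSEQ_unique)
  show "(\<lambda>n. cantor_iter (Suc n) x) \<longlonglongrightarrow> cantor_fun x"
    by (rule LIMSEQ_Suc[OF cantor_iter_tendsto]) (use x in auto)
  show "(\<lambda>n. cantor_iter (Suc n) x) \<longlonglongrightarrow> 1/2"
    using x by (simp add: cantor_iter_Suc_middle)
qed

lemma cantor_fun_reflect: "cantor_fun (1 - x) = 1 - cantor_fun x"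
proof (cases "x \<in> {0..1}")
  case True
  then have "(\<lambda>n. 1 - cantor_iter n x) \<longlonglongrightarrow> cantor_fun (1 - x)"
    using cantor_iter_tendsto[of "1 - x"] by (simp add: cantor_iter_reflect)
  with True show ?thesis
    by (intro LIMSEQ_unique[OF _ tendsto_diff[OF tendsto_const cantor_iter_tendsto]])
qed (auto simp: cantor_fun_def)

lemma cantor_fun_pos: assumes "0 < x" shows "0 < cantor_fun x"
proof -
  have power: "cantor_fun ((1/3) ^ n) = (1/2) ^ n" for n
  proof (induction n)
    case (Suc n)
    have "(1/3::real) ^ n \<in> {0..1}" by (simp add: power_le_one)
    then show ?case using cantor_fun_third[of "(1/3) ^ n"] Suc by simp
  qed (simp add: cantor_fun_eq_1)
  obtain n where "(1/3::real) ^ n < x" using real_arch_pow_inv[of x "1/3"] assms by auto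
  then have "(1/2) ^ n \<le> cantor_fun x" using monoD[OF mono_cantor_fun] power by (metis less_imp_le)
  then show ?thesis by (rule less_le_trans[rotated]) simp
qed

lemma cantor_fun_less_1: "x < 1 \<Longrightarrow> cantor_fun x < 1"
  using cantor_fun_pos[of "1 - x"] cantor_fun_reflect[of x] by simp

lemma endpoints_in_cantor_step: "0 \<in> cantor_step n" "1 \<in> cantor_step n"
proof (induction n)
  case (Suc n)
  have "(0::real) = 0 / 3" "(1::real) = 2/3 + 1 / 3" by simp_all
  with Suc show "0 \<in> cantor_step (Suc n)" "1 \<in> cantor_step (Suc n)"
    by (simp_all only: cantor_step.simps) blast+
qed simp_all

lemma cantor_fun_locally_constant:
  assumes "x \<in> {0..1} - cantor_step n"
  shows "\<forall>\<^sub>F y in nhds x. cantor_fun y = cantor_fun x"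
  using assms
proof (induction n arbitrary: x)
  case (Suc n)
  then have x: "x \<in> {0..1}" and
    not_left: "\<And>z. z \<in> cantor_step n \<Longrightarrow> x \<noteq> z / 3" and
    not_right: "\<And>z. z \<in> cantor_step n \<Longrightarrow> x \<noteq> 2/3 + z / 3"
    by auto
  consider "x \<le> 1/3" | "1/3 < x" "x < 2/3" | "2/3 \<le> x" by linarith
  then show ?case
  proof cases
    case 1
    have "3 * x \<notin> cantor_step n" using not_left[of "3 * x"] by auto
    moreover from this have "3 * x \<noteq> 0" "3 * x \<noteq> 1" using endpoints_in_cantor_step[of n] by auto
    ultimately have x': "x \<in> {0<..<1/3}" "3 * x \<in> {0..1} - cantor_step n"
      using 1 x by auto
    have "\<forall>\<^sub>F y in nhds x. cantor_fun (3 * y) = cantor_fun (3 * x)"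
      using Suc.IH[OF x'(2)] by (rule eventually_compose_filterlim) (intro tendsto_intros filterlim_ident)
    moreover have "\<forall>\<^sub>F y in nhds x. y \<in> {0<..<1/3}"
      using x' by (intro eventually_nhds_in_open) auto
    ultimately show ?thesis
    proof eventually_elim
      case (elim y)
      then show ?case using cantor_fun_third[of "3 * y"] cantor_fun_third[of "3 * x"] x' by simp
    qed
  next
    case 2
    then have "\<forall>\<^sub>F y in nhds x. y \<in> {1/3<..<2/3}"
      by (intro eventually_nhds_in_open) auto
    then show ?thesis
      by eventually_elim (use 2 in \<open>simp add: cantor_fun_middle_third\<close>)
  next
    case 3
    have "3 * x - 2 \<notin> cantor_step n" using not_right[of "3 * x - 2"] by (auto simp: field_simps)
    moreover from this have "3 * x - 2 \<noteq> 0" "3 * x - 2 \<noteq> 1" using endpoints_in_cantor_step[of n] by auto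
    ultimately have x': "x \<in> {2/3<..<1}" "3 * x - 2 \<in> {0..1} - cantor_step n"
      using 3 x by auto
    have "\<forall>\<^sub>F y in nhds x. cantor_fun (3 * y - 2) = cantor_fun (3 * x - 2)"
      using Suc.IH[OF x'(2)] by (rule eventually_compose_filterlim) (intro tendsto_intros filterlim_ident)
    moreover have "\<forall>\<^sub>F y in nhds x. y \<in> {2/3<..<1}"
      using x' by (intro eventually_nhds_in_open) auto
    ultimately show ?thesis
    proof eventually_elim
      case (elim y)
      have unshift: "2/3 + (3 * z - 2) / 3 = z" for z :: real by (simp add: field_simps)
      show ?case
        using cantor_fun_shifted_third[of "3 * y - 2"] cantor_fun_shifted_third[of "3 * x - 2"] elim x'
        unfolding unshift by simp
    qed
  qed
qed simp

lemma cantor_step_basic_interval: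
  assumes "x \<in> cantor_step n"
  shows "\<exists>a. 0 \<le> a \<and> a + (1/3) ^ n \<le> 1 \<and> x \<in> {a..a + (1/3) ^ n} \<and>
             cantor_fun (a + (1/3) ^ n) - cantor_fun a = (1/2) ^ n"
  using assms
proof (induction n arbitrary: x)
  case 0
  then show ?case by (intro exI[of _ 0]) (simp add: cantor_fun_eq_0 cantor_fun_eq_1)
next
  case (Suc n)
  define t :: real where "t = (1/3) ^ n"
  have t: "0 < t" "(1/3) ^ Suc n = t / 3" by (simp_all add: t_def)
  from Suc.prems obtain z where z: "z \<in> cantor_step n" "x = z / 3 \<or> x = 2/3 + z / 3" by auto
  with Suc.IH obtain a where a: "0 \<le> a" "a + t \<le> 1" "z \<in> {a..a + t}" "cantor_fun (a + t) - cantor_fun a = (1/2) ^ n"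
    unfolding t_def by blast
  from z(2) show ?case
  proof
    assume "x = z / 3"
    moreover have "cantor_fun ((a + t) / 3) - cantor_fun (a / 3) = (1/2) ^ Suc n"
      using cantor_fun_third[of a] cantor_fun_third[of "a + t"] a t by simp
    ultimately show ?case
      using a t by (intro exI[of _ "a / 3"]) (auto simp: add_divide_distrib)
  next
    assume "x = 2/3 + z / 3"
    moreover have "cantor_fun (2/3 + (a + t) / 3) - cantor_fun (2/3 + a / 3) = (1/2) ^ Suc n"
      using cantor_fun_shifted_third[of a] cantor_fun_shifted_third[of "a + t"] a t by simp
    ultimately show ?case
      using a t by (intro exI[of _ "2/3 + a / 3"]) (auto simp: add_divide_distrib add.assoc)
  qed
qed

section \<open>Tail integral and mean residual life\<close>

lemma integrable_cantor_fun: "cantor_fun integrable_on {a..b}"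
  by (rule integrable_continuous_interval[OF continuous_on_cantor_fun])

lemma integrable_cantor_survival: "(\<lambda>u. 1 - cantor_fun u) integrable_on {a..b}"
  by (intro integrable_continuous_interval continuous_intros continuous_on_cantor_fun)

definition cantor_tail :: "real \<Rightarrow> real" where
  "cantor_tail x = integral {x..1} (\<lambda>u. 1 - cantor_fun u)"

lemma cantor_tail_reflect: "cantor_tail x = integral {0..1 - x} cantor_fun"
proof -
  have "integral {0..1 - x} cantor_fun = integral {x + -1..1 + -1} (\<lambda>u. cantor_fun (- u))"
    using Henstock_Kurzweil_Integration.integral_reflect_real[of "1 - x" 0 cantor_fun] by simp
  also have "\<dots> = integral {x..1} ((\<lambda>u. cantor_fun (- u)) \<circ> (+) (-1))"
    by (rule integral_shift_Icc_real[symmetric])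
  also have "\<dots> = cantor_tail x"
    unfolding cantor_tail_def using cantor_fun_reflect by (simp add: o_def)
  finally show ?thesis ..
qed

lemma integral_cantor_fun_unit: "integral {0..1} cantor_fun = 1/2"
proof -
  have "integral {0..1} cantor_fun = integral {0..1} (\<lambda>u. 1 - cantor_fun u)"
    using cantor_tail_reflect[of 0] by (simp add: cantor_tail_def)
  also have "\<dots> = 1 - integral {0..1} cantor_fun"
    using integral_diff[OF integrable_const_ivl integrable_cantor_fun] by simp
  finally show ?thesis by simp
qed

lemma integral_cantor_fun_first_third: "integral {0..1/3} cantor_fun = 1/12"
proof -
  have "integral {0..1/3} cantor_fun = integral {0..1/3} (\<lambda>x. cantor_fun (3 * x) / 2)"
  proof (rule integral_cong)
    show "cantor_fun x = cantor_fun (3 * x) / 2" if "x \<in> {0..1/3}" for x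
      using cantor_fun_third[of "3 * x"] that by simp
  qed
  also have "\<dots> = integral ((\<lambda>x. x / 3) ` {0..1}) (\<lambda>x. cantor_fun (3 * x)) / 2"
    by simp
  also have "\<dots> = 1/12"
    using integral_stretch_real[where m = 3 and f = cantor_fun and a = 0 and b = 1]
    by (simp add: integral_cantor_fun_unit)
  finally show ?thesis .
qed

lemma cantor_tail_split:
  "a \<le> b \<Longrightarrow> b \<le> 1 \<Longrightarrow> cantor_tail a = integral {a..b} (\<lambda>u. 1 - cantor_fun u) + cantor_tail b"
  unfolding cantor_tail_def
  by (intro Henstock_Kurzweil_Integration.integral_combine[symmetric] integrable_cantor_survival) auto

lemma integral_cantor_survival_lower:
  assumes "a \<le> b" shows "(b - a) * (1 - cantor_fun b) \<le> integral {a..b} (\<lambda>u. 1 - cantor_fun u)"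
proof -
  have "integral {a..b} (\<lambda>u. 1 - cantor_fun b) \<le> integral {a..b} (\<lambda>u. 1 - cantor_fun u)"
    by (intro integral_le integrable_const_ivl integrable_cantor_survival)
       (simp add: monoD[OF mono_cantor_fun])
  with assms show ?thesis by simp
qed

lemma integral_cantor_survival_upper:
  assumes "a \<le> b" shows "integral {a..b} (\<lambda>u. 1 - cantor_fun u) \<le> (b - a) * (1 - cantor_fun a)"
proof -
  have "integral {a..b} (\<lambda>u. 1 - cantor_fun u) \<le> integral {a..b} (\<lambda>u. 1 - cantor_fun a)"
    by (intro integral_le integrable_const_ivl integrable_cantor_survival)
       (simp add: monoD[OF mono_cantor_fun])
  with assms show ?thesis by simp
qed

lemma cantor_tail_nonneg: "0 \<le> cantor_tail x"
  unfolding cantor_tail_def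
  by (intro integral_nonneg integrable_cantor_survival) (simp add: cantor_fun_le_1)

lemma cantor_tail_antimono:
  assumes "a \<le> b" "b \<le> 1" shows "cantor_tail b \<le> cantor_tail a"
proof -
  have "0 \<le> (b - a) * (1 - cantor_fun b)" using assms cantor_fun_le_1[of b] by simp
  then show ?thesis
    using cantor_tail_split[OF assms] integral_cantor_survival_lower[OF assms(1)] by linarith
qed

lemma cantor_tail_pos: assumes "x < 1" shows "0 < cantor_tail x"
proof -
  define c where "c = (1 + x) / 2"
  have "0 < (c - x) * (1 - cantor_fun c)"
    using cantor_fun_less_1[of c] assms by (simp add: c_def)
  then show ?thesis
    using cantor_tail_split[of x c] integral_cantor_survival_lower[of x c] cantor_tail_nonneg[of c] assms
    by (simp add: c_def)
qed

lemma continuous_on_cantor_tail: "continuous_on {0..1} cantor_tail"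
  unfolding cantor_tail_def by (intro indefinite_integral_continuous_1' integrable_cantor_survival)

lemma cantor_tail_middle_third: assumes "x \<in> {1/3..2/3}" shows "cantor_tail x = 5/12 - x/2"
proof -
  have "integral {x..2/3} (\<lambda>u. 1 - cantor_fun u) = integral {x..2/3} (\<lambda>u. 1/2)"
    using assms by (intro integral_cong) (auto simp: cantor_fun_middle_third)
  moreover have "cantor_tail (2/3) = 1/12"
    using cantor_tail_reflect[of "2/3"] integral_cantor_fun_first_third by simp
  ultimately show ?thesis
    using cantor_tail_split[of x "2/3"] assms by simp
qed

lemma mrl_eq_cantor_tail: "x < 1 \<Longrightarrow> mrl x = cantor_tail x / (1 - cantor_fun x)"
  by (simp add: mrl_def cantor_tail_def)

lemma mrl_nonneg: "0 \<le> mrl x"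
  by (simp add: mrl_def cantor_tail_nonneg[unfolded cantor_tail_def] cantor_fun_le_1)

lemma mrl_le: assumes "x < 1" shows "mrl x \<le> 1 - x"
proof -
  have "cantor_tail x \<le> (1 - x) * (1 - cantor_fun x)"
    using integral_cantor_survival_upper[of x 1] assms by (simp add: cantor_tail_def)
  then show ?thesis
    using cantor_fun_less_1[OF assms] assms by (simp add: mrl_eq_cantor_tail divide_le_eq)
qed

lemma mrl_reflected: "x < 1 \<Longrightarrow> mrl x = (1 / cantor_fun (1 - x)) * integral {0..1 - x} cantor_fun"
  using cantor_fun_reflect[of x] cantor_tail_reflect[of x] by (simp add: mrl_eq_cantor_tail)

lemma continuous_on_mrl: "continuous_on {0..1} mrl"
proof -
  have "1 - cantor_fun x \<noteq> 0" if "x \<in> {0..<1}" for x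
    using cantor_fun_less_1[of x] that by simp
  then have "continuous_on {0..<1} (\<lambda>x. cantor_tail x / (1 - cantor_fun x))"
    by (intro continuous_intros continuous_on_subset[OF continuous_on_cantor_tail] continuous_on_cantor_fun)
       auto
  then have on_left: "continuous_on {0..<1} mrl"
    by (rule continuous_on_eq) (simp add: mrl_eq_cantor_tail)
  have "(mrl \<longlongrightarrow> mrl x) (at x within {0..1})" if x: "x \<in> {0..1}" for x
  proof (cases "x = 1")
    case True
    \<comment> \<open>At 1 the quotient formula degenerates to \<open>0 / 0\<close>; squeeze \<open>0 \<le> mrl y \<le> 1 - y\<close> instead.\<close>
    have upper: "\<forall>\<^sub>F y in at 1 within {0..1}. mrl y \<le> 1 - y"
      unfolding eventually_at_filter by (intro always_eventually) (auto intro: mrl_le)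
    have lower: "\<forall>\<^sub>F y in at 1 within {0..1}. 0 \<le> mrl y"
      by (simp add: mrl_nonneg)
    have "((\<lambda>y. 1 - y) \<longlongrightarrow> 0) (at (1::real) within {0..1})"
      using tendsto_diff[OF tendsto_const tendsto_ident_at, of "1::real" 1 "{0..1}"] by simp
    then have "(mrl \<longlongrightarrow> 0) (at 1 within {0..1})"
      by (rule tendsto_sandwich[OF lower upper tendsto_const])
    with True show ?thesis by (simp add: mrl_def)
  next
    case False
    with x have "(mrl \<longlongrightarrow> mrl x) (at x within {0..<1})"
      using on_left by (simp add: continuous_on_def)
    moreover have "\<forall>\<^sub>F y in at x. y \<in> {0..<1} \<longleftrightarrow> y \<in> {0..1}"
      using eventually_at_in_open'[of "{..<1}" x] x False by (auto elim: eventually_mono)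
    ultimately show ?thesis by (rule Lim_transform_within_set)
  qed
  then show ?thesis by (simp add: continuous_on_def)
qed

section \<open>Fixed point and local monotonicity\<close>

lemma mrl_middle_third: assumes "x \<in> {1/3..2/3}" shows "mrl x = 5/6 - x"
  using assms by (simp add: mrl_eq_cantor_tail cantor_tail_middle_third cantor_fun_middle_third)

lemma less_mrl_first_third: assumes "x < 1/3" shows "x < mrl x"
proof -
  have "(1/3 - x) * (1 - cantor_fun (1/3)) \<le> integral {x..1/3} (\<lambda>u. 1 - cantor_fun u)"
    using assms by (intro integral_cantor_survival_lower) simp
  then have tail: "5/12 - x/2 \<le> cantor_tail x"
    using cantor_tail_split[of x "1/3"] cantor_tail_middle_third[of "1/3"] cantor_fun_middle_third[of "1/3"] assms
    by simp
  have p: "0 < 1 - cantor_fun x" "1 - cantor_fun x \<le> 1"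
    using cantor_fun_less_1[of x] cantor_fun_nonneg[of x] assms by simp_all
  have mrl: "mrl x = cantor_tail x / (1 - cantor_fun x)"
    using assms by (simp add: mrl_eq_cantor_tail)
  show ?thesis
  proof (cases "x \<le> 2/9")
    case True
    have "cantor_tail x \<le> mrl x"
      unfolding mrl using p cantor_tail_nonneg[of x] by (simp add: le_divide_eq mult_left_le)
    with tail True show ?thesis by linarith
  next
    case False
    have "cantor_fun (2/9) = 1/4"
      using cantor_fun_third[of "2/3"] cantor_fun_middle_third[of "2/3"] by simp
    then have "1 - cantor_fun x \<le> 3/4"
      using monoD[OF mono_cantor_fun, of "2/9" x] False by simp
    then have "cantor_tail x * (1 - cantor_fun x) \<le> cantor_tail x * (3/4)"
      using cantor_tail_nonneg[of x] by (rule mult_left_mono)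
    then have "4/3 * cantor_tail x \<le> mrl x"
      unfolding mrl using p by (simp add: le_divide_eq)
    with tail assms show ?thesis by linarith
  qed
qed

lemma mrl_less_self: assumes "1/2 < x" shows "mrl x < x"
  using mrl_le[of x] assms by (cases "x < 1") (auto simp: mrl_def)

lemma mrl_fixed_point: "{x \<in> {0..1}. mrl x = x} = {5/12}"
proof -
  have "x = 5/12" if "mrl x = x" for x
  proof -
    consider "x < 1/3" | "x \<in> {1/3..2/3}" | "2/3 < x" by force
    then show ?thesis
      by cases (use that less_mrl_first_third[of x] mrl_middle_third[of x] mrl_less_self[of x] in auto)
  qed
  then show ?thesis by (auto simp: mrl_middle_third)
qed

lemma mrl_increment_lower_bound:
  assumes "a \<le> b" "b < 1"
  shows "cantor_tail b * (cantor_fun b - cantor_fun a) - (b - a) \<le> mrl b - mrl a"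
proof -
  define p q where "p = 1 - cantor_fun a" and "q = 1 - cantor_fun b"
  have pq: "0 < q" "q \<le> p" "p \<le> 1"
    using cantor_fun_less_1[of b] monoD[OF mono_cantor_fun assms(1)] cantor_fun_nonneg[of a] assms
    by (simp_all add: p_def q_def)
  have "cantor_tail a \<le> (b - a) * p + cantor_tail b"
    using cantor_tail_split[of a b] integral_cantor_survival_upper[of a b] assms by (simp add: p_def)
  then have "cantor_tail a / p \<le> ((b - a) * p + cantor_tail b) / p"
    using pq by (intro divide_right_mono) auto
  then have mrl_a: "mrl a \<le> (b - a) + cantor_tail b / p"
    using pq assms by (simp add: mrl_eq_cantor_tail p_def add_divide_distrib)
  have "cantor_tail b * (p - q) \<le> cantor_tail b * (p - q) / (p * q)"
    using pq cantor_tail_nonneg[of b] mult_le_one[of p q]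
    by (simp add: le_divide_eq mult_left_le)
  also have "\<dots> = cantor_tail b / q - cantor_tail b / p"
    using pq by (simp add: field_simps)
  finally show ?thesis
    using mrl_a assms by (simp add: mrl_eq_cantor_tail p_def q_def)
qed

lemma mrl_gmrl_strict_increase:
  assumes "0 < a" "a \<le> b" "b < 1"
    and gap: "b - a < a * (cantor_tail b * (cantor_fun b - cantor_fun a) - (b - a))"
  shows "mrl a < mrl b \<and> gmrl a < gmrl b"
proof -
  define D where "D = cantor_tail b * (cantor_fun b - cantor_fun a) - (b - a)"
  have D: "D \<le> mrl b - mrl a"
    unfolding D_def by (rule mrl_increment_lower_bound[OF assms(2,3)])
  have "0 < a * D" using gap assms by (simp add: D_def)
  then have "0 < D" using assms by (simp add: zero_less_mult_iff)
  have "a * D \<le> a * (mrl b - mrl a)" using D assms by simp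
  moreover have "mrl a * (b - a) \<le> b - a"
    using mrl_le[of a] mrl_nonneg[of a] assms by (simp add: mult_left_le_one_le)
  ultimately have "mrl a * b < mrl b * a"
    using gap by (simp add: D_def algebra_simps)
  then show ?thesis
    using \<open>0 < D\<close> D assms by (simp add: gmrl_def divide_less_eq field_simps)
qed

lemma mrl_gmrl_increase_near_cantor_set:
  assumes x: "x \<in> cantor_set" "0 < x" "x < 1" and "0 < \<epsilon>"
  shows "\<exists>a b. a \<le> b \<and> \<bar>a - x\<bar> < \<epsilon> \<and> \<bar>b - x\<bar> < \<epsilon> \<and> mrl a < mrl b \<and> gmrl a < gmrl b"
proof -
  define c where "c = (1 + x) / 2"
  define K where "K = cantor_tail c"
  \<comment> \<open>\<open>K\<close> bounds the tail integral from below on \<open>[0, c]\<close>, uniformly near \<open>x\<close>.\<close>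
  have K: "0 < K" using x by (simp add: K_def c_def cantor_tail_pos)
  have bound_pos: "0 < min (x * K / 4) (min \<epsilon> (min (x / 2) ((1 - x) / 2)))"
    using K x \<open>0 < \<epsilon>\<close> by simp
  obtain n where n: "(2/3) ^ n < min (x * K / 4) (min \<epsilon> (min (x / 2) ((1 - x) / 2)))"
    using real_arch_pow_inv[OF bound_pos, of "2/3"] by auto
  define t s :: real where "t = (1/3) ^ n" and "s = (1/2) ^ n"
  have ts: "t = (2/3) ^ n * s" by (simp add: t_def s_def flip: power_mult_distrib)
  have s: "0 < s" "s \<le> 1" by (simp_all add: s_def power_le_one)
  then have "t \<le> (2/3) ^ n" unfolding ts by (simp add: mult_left_le)
  then have t: "0 < t" "t < \<epsilon>" "t < x / 2" "t < (1 - x) / 2" using n by (simp_all add: t_def)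
  have "4 * t < x * K * s" unfolding ts using n s by (simp add: field_simps)
  moreover have "x * K * s \<le> K * s" using x K s by (simp add: mult_left_le_one_le)
  ultimately have "t \<le> K * s" using t by linarith
  obtain a where a: "x \<in> {a..a + t}" "cantor_fun (a + t) - cantor_fun a = s"
    using cantor_step_basic_interval[of x n] x(1) unfolding cantor_set_def t_def s_def by blast
  define b where "b = a + t"
  have "a \<le> x" "x \<le> a + t" using a(1) by simp_all
  then have ab: "x / 2 < a" "a \<le> b" "b \<le> c" "\<bar>a - x\<bar> < \<epsilon>" "\<bar>b - x\<bar> < \<epsilon>"
    using t unfolding b_def c_def abs_less_iff by auto
  then have "K \<le> cantor_tail b" unfolding K_def using x by (intro cantor_tail_antimono) (auto simp: c_def)
  then have gain: "x / 2 * (K * s - t) \<le> a * (cantor_tail b * s - t)"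
    using ab s \<open>t \<le> K * s\<close> x by (intro mult_mono) auto
  have "t * x < t" using t x by simp
  moreover have "x / 2 * (K * s - t) = x * K * s / 2 - t * x / 2" by (simp add: field_simps)
  ultimately have "t < x / 2 * (K * s - t)"
    using \<open>4 * t < x * K * s\<close> \<open>0 < t\<close> by linarith
  with gain have "b - a < a * (cantor_tail b * (cantor_fun b - cantor_fun a) - (b - a))"
    using a by (simp add: b_def)
  then have "mrl a < mrl b \<and> gmrl a < gmrl b"
    using ab x t by (intro mrl_gmrl_strict_increase) (auto simp: b_def c_def)
  with ab show ?thesis by blast
qed

lemma not_locally_decreasing_atI:
  assumes "\<And>\<epsilon>. 0 < \<epsilon> \<Longrightarrow> \<exists>a b. a \<le> b \<and> \<bar>a - x\<bar> < \<epsilon> \<and> \<bar>b - x\<bar> < \<epsilon> \<and> f a < f b"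
  shows "\<not> locally_decreasing_at f x"
proof
  assume "locally_decreasing_at f x"
  then obtain U where U: "open U" "x \<in> U" "\<forall>a\<in>U. \<forall>b\<in>U. a \<le> b \<longrightarrow> f b \<le> f a"
    unfolding locally_decreasing_at_def by blast
  obtain \<epsilon> where "0 < \<epsilon>" and ball: "ball x \<epsilon> \<subseteq> U"
    using U(1,2) by (auto simp: open_contains_ball)
  with assms obtain a b where ab: "a \<le> b" "\<bar>a - x\<bar> < \<epsilon>" "\<bar>b - x\<bar> < \<epsilon>" "f a < f b"
    by blast
  then have "a \<in> U" "b \<in> U"
    using ball by (auto simp: dist_real_def abs_minus_commute[of x])
  with U(3) ab show False by fastforce
qed

lemma locally_decreasing_outside_cantor_set:
  assumes x: "x \<in> {0<..<1}" "x \<notin> cantor_set"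
  shows "locally_decreasing_at mrl x \<and> locally_decreasing_at gmrl x"
proof -
  obtain n where "x \<in> {0..1} - cantor_step n" using x by (auto simp: cantor_set_def)
  from cantor_fun_locally_constant[OF this]
  obtain U where U: "open U" "x \<in> U" "\<forall>y\<in>U. cantor_fun y = cantor_fun x"
    unfolding eventually_nhds by blast
  define V where "V = U \<inter> {0<..<1}"
  have V: "open V" "x \<in> V" "V \<subseteq> {0<..<1}" using U x by (auto simp: V_def)
  have p: "0 < 1 - cantor_fun x" using cantor_fun_less_1[of x] x by simp
  have mrl_anti: "mrl b \<le> mrl a" if "a \<in> V" "b \<in> V" "a \<le> b" for a b
    using that U(3) cantor_tail_antimono[of a b] p
    by (auto simp: V_def mrl_eq_cantor_tail intro: divide_right_mono)
  have "gmrl b \<le> gmrl a" if "a \<in> V" "b \<in> V" "a \<le> b" for a b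
    unfolding gmrl_def using that mrl_anti[OF that] mrl_nonneg[of b] V(3)
    by (intro frac_le) auto
  with V mrl_anti show ?thesis unfolding locally_decreasing_at_def by blast
qed

lemma locally_decreasing_iff_not_in_cantor_set:
  assumes x: "x \<in> {0<..<1}"
  shows "(locally_decreasing_at mrl x \<longleftrightarrow> x \<notin> cantor_set) \<and>
         (locally_decreasing_at gmrl x \<longleftrightarrow> x \<notin> cantor_set)"
proof (cases "x \<in> cantor_set")
  case True
  have increase: "\<exists>a b. a \<le> b \<and> \<bar>a - x\<bar> < \<epsilon> \<and> \<bar>b - x\<bar> < \<epsilon> \<and> mrl a < mrl b \<and> gmrl a < gmrl b"
    if "0 < \<epsilon>" for \<epsilon>
    using mrl_gmrl_increase_near_cantor_set[OF True _ _ that] x by simp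
  have "\<not> locally_decreasing_at mrl x" "\<not> locally_decreasing_at gmrl x"
    by (rule not_locally_decreasing_atI, use increase in blast)+
  with True show ?thesis by blast
qed (use locally_decreasing_outside_cantor_set x in blast)

theorem theorem1:
  shows "(continuous_on {0..1} mrl \<and>
          (\<forall>x\<in>{0..<1}. mrl x = (1 / cantor_fun (1 - x)) * integral {0..1 - x} cantor_fun))
       \<and> (\<forall>x\<in>{0<..<1}.
            (locally_decreasing_at mrl x \<longleftrightarrow> x \<in> {0..1} - cantor_set) \<and>
            (locally_decreasing_at gmrl x \<longleftrightarrow> x \<in> {0..1} - cantor_set))
       \<and> {x\<in>{0..1}. mrl x = x} = {5/12}"
proof (intro conjI ballI)
  show "continuous_on {0..1} mrl" by (rule continuous_on_mrl)
  show "mrl x = (1 / cantor_fun (1 - x)) * integral {0..1 - x} cantor_fun" if "x \<in> {0..<1}" for x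
    using that by (simp add: mrl_reflected)
  show "{x \<in> {0..1}. mrl x = x} = {5/12}" by (rule mrl_fixed_point)
  fix x :: real assume x: "x \<in> {0<..<1}"
  then have "x \<in> {0..1}" by simp
  with locally_decreasing_iff_not_in_cantor_set[OF x]
  show "locally_decreasing_at mrl x \<longleftrightarrow> x \<in> {0..1} - cantor_set"
    and "locally_decreasing_at gmrl x \<longleftrightarrow> x \<in> {0..1} - cantor_set"
    by simp_all
qed

end
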